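(* Let $G$ be a group of finite rank and $T$ a finite normal subgroup of $G$, and put $Q=G/T$. Then $\alpha_G^*=\alpha_Q^*$ for $*\in\{\leq,\lhd\}$, and $\zeta_{G,p}^*(s)=\zeta_{Q,p}^*(s)$ for every prime $p$ not dividing $|T|$.
   Context: $a_n^{\leq}(G)$ (resp. $a_n^{\lhd}(G)$) is the number of subgroups (resp. normal subgroups) of index $n$ in $G$; $\alpha_G^*:=\inf\{\alpha:\exists c>0\ \forall n\ \sum_{i\le n}a_i^*(G)\le cn^{\alpha}\}$; the local factor at a prime $p$ is $\zeta_{G,p}^*(s)=\sum_{k\ge0}a_{p^k}^*(G)p^{-ks}$. *)

theory Defs
  imports "HOL-Algebra.Algebra" "HOL-Library.Extended_Real"
    "HOL-Computational_Algebra.Formal_Power_Series"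
    "HOL-Computational_Algebra.Primes"
begin

definition finite_rank :: "('a, 'b) monoid_scheme \<Rightarrow> bool" where
  "finite_rank G \<longleftrightarrow> (\<exists>r::nat. \<forall>S. S \<subseteq> carrier G \<and> finite S \<longrightarrow>
      (\<exists>S'. S' \<subseteq> carrier G \<and> finite S' \<and> card S' \<le> r \<and> generate G S' = generate G S))"

datatype subgroup_kind = AllSub | NormalSub

definition counted :: "subgroup_kind \<Rightarrow> 'a set \<Rightarrow> ('a, 'b) monoid_scheme \<Rightarrow> bool" where
  "counted k H G = (case k of AllSub \<Rightarrow> subgroup H G | NormalSub \<Rightarrow> H \<lhd> G)"

definition sub_count :: "('a, 'b) monoid_scheme \<Rightarrow> subgroup_kind \<Rightarrow> nat \<Rightarrow> nat" where
  "sub_count G k n = card {H. counted k H G \<and> card (rcosets\<^bsub>G\<^esub> H) = n}"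

definition growth_alpha :: "('a, 'b) monoid_scheme \<Rightarrow> subgroup_kind \<Rightarrow> ereal" where
  "growth_alpha G k = Inf {ereal a | a. \<exists>c>0. \<forall>n::nat.
      real (\<Sum>i\<in>{1..n}. sub_count G k i) \<le> c * real n powr a}"

text \<open>Local factor at p, as a formal power series in the variable p^(-s).\<close>
definition zeta_local :: "('a, 'b) monoid_scheme \<Rightarrow> subgroup_kind \<Rightarrow> nat \<Rightarrow> nat fps" where
  "zeta_local G k p = Abs_fps (\<lambda>j. sub_count G k (p ^ j))"

end

theory Submission
  imports Defs
begin

text \<open>
  Let \<open>H\<close> have index \<open>n\<close> in \<open>G\<close>. Then \<open>HT \<supseteq> T\<close> has index \<open>n / s\<close>, where
  \<open>s = |HT : H| = |T : T \<inter> H|\<close> divides \<open>|T|\<close>, and subgroups containing \<open>T\<close> correspond to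
  subgroups of \<open>Q = G/T\<close> of the same index. Conversely \<open>H\<close> has index at most \<open>|T|\<close> in
  \<open>HT\<close>, and finite rank bounds the number of subgroups of bounded index in any subgroup
  \<open>K\<close>: such a subgroup is determined by the permutations of its cosets induced by a
  generating set of a subgroup containing finitely many separating elements, and this
  subgroup is generated by \<open>r\<close> elements. Hence, for a constant \<open>B\<close>,
  \<open>a\<^sub>n(Q) \<le> a\<^sub>n(G) \<le> B \<Sum>\<^bsub>s | |T|, s | n\<^esub> a\<^bsub>n/s\<^esub>(Q)\<close>, the partial sums for \<open>G\<close> and
  \<open>Q\<close> agree up to a constant factor, and \<open>\<alpha>\<^sub>G = \<alpha>\<^sub>Q\<close>. If \<open>n = p\<^sup>j\<close> and
  \<open>p\<close> does not divide \<open>|T|\<close>, then \<open>s = 1\<close>, i.e. \<open>T \<subseteq> H\<close>, so \<open>a\<^sub>n(G) = a\<^sub>n(Q)\<close>.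
\<close>

lemma card_image_eq_if_same_fibres:
  assumes "\<And>x y. x \<in> A \<Longrightarrow> y \<in> A \<Longrightarrow> f x = f y \<longleftrightarrow> g x = g y"
  shows "card (f ` A) = card (g ` A)"
proof -
  define h where "h c = g (inv_into A f c)" for c
  have h: "h (f x) = g x" if "x \<in> A" for x
    unfolding h_def by (metis that assms f_inv_into_f imageI inv_into_into)
  have "bij_betw h (f ` A) (g ` A)"
  proof (rule bij_betw_imageI)
    show "inj_on h (f ` A)"
      by (auto simp: inj_on_def h assms)
    show "h ` f ` A = g ` A"
      by (auto simp: h image_iff)
  qed
  then show ?thesis
    by (rule bij_betw_same_card)
qed

lemma finite_separating_subset:
  assumes "finite F" and "\<And>H. H \<in> F \<Longrightarrow> H \<subseteq> K"
  shows "\<exists>A. A \<subseteq> K \<and> finite A \<and> (\<forall>H1\<in>F. \<forall>H2\<in>F. H1 \<inter> A = H2 \<inter> A \<longrightarrow> H1 = H2)"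
proof -
  define P where "P = {(H1, H2). H1 \<in> F \<and> H2 \<in> F \<and> H1 \<noteq> H2}"
  have "\<exists>d. d \<in> K \<and> \<not> (d \<in> fst p \<longleftrightarrow> d \<in> snd p)" if "p \<in> P" for p
  proof -
    obtain H1 H2 where "p = (H1, H2)" "H1 \<subseteq> K" "H2 \<subseteq> K" "H1 \<noteq> H2"
      using \<open>p \<in> P\<close> assms(2) unfolding P_def by blast
    then show ?thesis
      by auto
  qed
  then obtain D where D: "\<And>p. p \<in> P \<Longrightarrow> D p \<in> K \<and> \<not> (D p \<in> fst p \<longleftrightarrow> D p \<in> snd p)"
    by metis
  have "finite P"
    using assms(1) by (intro finite_subset[of P "F \<times> F"]) (auto simp: P_def)
  moreover have "H1 = H2" if "H1 \<in> F" "H2 \<in> F" "H1 \<inter> D ` P = H2 \<inter> D ` P" for H1 H2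
  proof (rule ccontr)
    assume "H1 \<noteq> H2"
    then have "(H1, H2) \<in> P"
      using that unfolding P_def by simp
    then have "D (H1, H2) \<in> H1 \<longleftrightarrow> D (H1, H2) \<in> H2"
      using that(3) by blast
    then show False
      using D[OF \<open>(H1, H2) \<in> P\<close>] by simp
  qed
  ultimately show ?thesis
    using D by (intro exI[of _ "D ` P"]) auto
qed

lemma sum_dvd_div_le:
  fixes c :: "nat \<Rightarrow> nat"
  assumes "0 < s"
  shows "(\<Sum>n=1..N. if s dvd n then c (n div s) else 0) \<le> (\<Sum>j=1..N. c j)"
proof -
  have "(\<Sum>n=1..N. if s dvd n then c (n div s) else 0) = (\<Sum>n\<in>{n\<in>{1..N}. s dvd n}. c (n div s))"
    by (rule sum.inter_filter[symmetric]) simp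
  also have "\<dots> = (\<Sum>j\<in>(\<lambda>n. n div s) ` {n\<in>{1..N}. s dvd n}. c j)"
    using assms by (subst sum.reindex) (auto simp: inj_on_def elim!: dvdE)
  also have "\<dots> \<le> (\<Sum>j=1..N. c j)"
  proof (rule sum_mono2)
    show "(\<lambda>n. n div s) ` {n \<in> {1..N}. s dvd n} \<subseteq> {1..N}"
    proof clarify
      fix n assume "n \<in> {1..N}" "s dvd n"
      then have "0 < n div s"
        using assms by (auto simp: div_greater_zero_iff dvd_imp_le)
      moreover have "n div s \<le> N"
        using \<open>n \<in> {1..N}\<close> div_le_dividend[of n s] by (simp only: atLeastAtMost_iff) linarith
      ultimately show "n div s \<in> {1..N}"
        by simp
    qed
  qed auto
  finally show ?thesis .
qed

lemma sum_le_if_divisor_sum_bound: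
  fixes a b :: "nat \<Rightarrow> nat"
  assumes "0 < t" and bound: "\<And>n. 0 < n \<Longrightarrow> a n \<le> B * (\<Sum>s | s dvd t. if s dvd n then b (n div s) else 0)"
  shows "(\<Sum>i=1..N. a i) \<le> B * t * (\<Sum>i=1..N. b i)"
proof -
  have "(\<Sum>i=1..N. a i) \<le> (\<Sum>i=1..N. B * (\<Sum>s | s dvd t. if s dvd i then b (i div s) else 0))"
    using bound by (intro sum_mono) auto
  also have "\<dots> = B * (\<Sum>s | s dvd t. \<Sum>i=1..N. if s dvd i then b (i div s) else 0)"
    unfolding sum_distrib_left[symmetric] by (subst sum.swap) (rule refl)
  also have "\<dots> \<le> B * (\<Sum>s | s dvd t. \<Sum>i=1..N. b i)"
    using assms(1) by (intro mult_left_mono sum_mono sum_dvd_div_le) (auto intro: gr0I)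
  also have "\<dots> = B * card {s. s dvd t} * (\<Sum>i=1..N. b i)"
    by simp
  also have "\<dots> \<le> B * t * (\<Sum>i=1..N. b i)"
  proof -
    have "{s. s dvd t} \<subseteq> {1..t}"
      using assms(1) by (auto intro: dvd_imp_le gr0I)
    then have "card {s. s dvd t} \<le> t"
      using card_mono[of "{1..t}"] by fastforce
    then show ?thesis
      by (intro mult_right_mono mult_left_mono) auto
  qed
  finally show ?thesis .
qed

lemma growth_alpha_mono:
  assumes "\<And>N. (\<Sum>i=1..N. sub_count G k i) \<le> C * (\<Sum>i=1..N. sub_count H k i)"
  shows "growth_alpha G k \<le> growth_alpha H k"
  unfolding growth_alpha_def
proof (rule Inf_superset_mono, clarify)
  fix a c :: real assume "c > 0" and c: "\<forall>n::nat. real (\<Sum>i=1..n. sub_count H k i) \<le> c * real n powr a"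
  have "real (\<Sum>i=1..n. sub_count G k i) \<le> (real C + 1) * c * real n powr a" for n :: nat
  proof -
    have "real (\<Sum>i=1..n. sub_count G k i) \<le> real C * real (\<Sum>i=1..n. sub_count H k i)"
      using assms[of n] by (metis of_nat_le_iff of_nat_mult)
    also have "\<dots> \<le> (real C + 1) * real (\<Sum>i=1..n. sub_count H k i)"
      by (intro mult_right_mono) (simp_all add: sum_nonneg)
    also have "\<dots> \<le> (real C + 1) * (c * real n powr a)"
      using c by (intro mult_left_mono) auto
    finally show ?thesis
      by (simp add: mult.assoc)
  qed
  moreover have "(real C + 1) * c > 0"
    using \<open>c > 0\<close> by simp
  ultimately show "\<exists>a'. ereal a = ereal a' \<and> (\<exists>c>0. \<forall>n::nat. real (\<Sum>i=1..n. sub_count G k i) \<le> c * real n powr a')"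
    by blast
qed

definition rank_at_most :: "('a, 'b) monoid_scheme \<Rightarrow> nat \<Rightarrow> bool" where
  "rank_at_most G r \<longleftrightarrow> (\<forall>S. S \<subseteq> carrier G \<and> finite S \<longrightarrow>
      (\<exists>S'. S' \<subseteq> carrier G \<and> finite S' \<and> card S' \<le> r \<and> generate G S' = generate G S))"

lemma finite_rank_iff_rank_at_most: "finite_rank G \<longleftrightarrow> (\<exists>r. rank_at_most G r)"
  by (simp add: finite_rank_def rank_at_most_def)

definition coset_reps :: "('a, 'b) monoid_scheme \<Rightarrow> 'a set \<Rightarrow> 'a set \<Rightarrow> nat \<Rightarrow> (nat \<Rightarrow> 'a) \<Rightarrow> bool" where
  "coset_reps G K H n u \<longleftrightarrow> (\<forall>j<n. u j \<in> K) \<and> (\<forall>x\<in>K. \<exists>j<n. x \<otimes>\<^bsub>G\<^esub> inv\<^bsub>G\<^esub> u j \<in> H)"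

text \<open>If \<open>u\<close> enumerates representatives of the right cosets of \<open>H\<close> in \<open>K\<close>,
  then \<open>(i, j)\<close> lies in the table of \<open>k \<in> K\<close> iff \<open>H u\<^sub>i k = H u\<^sub>j\<close>: the table is
  the permutation of the cosets induced by \<open>k\<close>.\<close>
definition coset_table :: "('a, 'b) monoid_scheme \<Rightarrow> 'a set \<Rightarrow> nat \<Rightarrow> (nat \<Rightarrow> 'a) \<Rightarrow> 'a \<Rightarrow> (nat \<times> nat) set" where
  "coset_table G H n u k = {(i, j). i < n \<and> j < n \<and> u i \<otimes>\<^bsub>G\<^esub> k \<otimes>\<^bsub>G\<^esub> inv\<^bsub>G\<^esub> u j \<in> H}"

definition subgroups_of_index_le :: "('a, 'b) monoid_scheme \<Rightarrow> 'a set \<Rightarrow> nat \<Rightarrow> 'a set set" where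
  "subgroups_of_index_le G K n = {H. subgroup H G \<and> H \<subseteq> K \<and>
      finite ((\<lambda>k. H #>\<^bsub>G\<^esub> k) ` K) \<and> card ((\<lambda>k. H #>\<^bsub>G\<^esub> k) ` K) \<le> n}"

lemma counted_subgroup: "counted k H G \<Longrightarrow> subgroup H G"
  unfolding counted_def by (cases k) (auto intro: normal_imp_subgroup)

context group
begin

lemma rcos_eq_iff:
  assumes "subgroup H G" "x \<in> carrier G" "y \<in> carrier G"
  shows "H #> x = H #> y \<longleftrightarrow> x \<otimes> inv y \<in> H"
  by (metis assms rcos_self repr_independence subgroup.rcos_module is_group)

lemma rcosets_eq_image: "rcosets H = (\<lambda>x. H #> x) ` carrier G"
  unfolding RCOSETS_def by auto

lemma subgroup_mult_left_iff:
  assumes "subgroup H G" "a \<in> H" "b \<in> carrier G"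
  shows "a \<otimes> b \<in> H \<longleftrightarrow> b \<in> H"
  by (metis assms inv_solve_left' subgroup.m_closed subgroup.m_inv_closed subgroup.mem_carrier inv_closed m_closed)

lemma coset_reps_carrier:
  assumes "coset_reps G K H n u" and "subgroup K G" and "j < n"
  shows "u j \<in> carrier G"
  using assms subgroup.mem_carrier[OF assms(2)] unfolding coset_reps_def by blast

lemma coset_table_mult:
  assumes H: "subgroup H G" and K: "subgroup K G" and reps: "coset_reps G K H n u"
    and a: "a \<in> K" and b: "b \<in> carrier G"
  shows "coset_table G H n u (a \<otimes> b) = coset_table G H n u a O coset_table G H n u b"
proof -
  note u = coset_reps_carrier[OF reps K]
  have ac: "a \<in> carrier G"
    using a subgroup.mem_carrier[OF K] by blast
  have split: "u i \<otimes> (a \<otimes> b) \<otimes> inv u j = (u i \<otimes> a \<otimes> inv u l) \<otimes> (u l \<otimes> b \<otimes> inv u j)"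
    if "i < n" "j < n" "l < n" for i j l
    using u[OF that(1)] u[OF that(2)] u[OF that(3)] ac b by (simp add: m_assoc inv_solve_left)
  have "(i, j) \<in> coset_table G H n u (a \<otimes> b) \<longleftrightarrow> (i, j) \<in> coset_table G H n u a O coset_table G H n u b"
    for i j
  proof
    assume ij: "(i, j) \<in> coset_table G H n u (a \<otimes> b)"
    then have "i < n" "j < n"
      unfolding coset_table_def by auto
    have "u i \<otimes> a \<in> K"
      using reps a \<open>i < n\<close> subgroup.m_closed[OF K] unfolding coset_reps_def by blast
    then obtain l where l: "l < n" "u i \<otimes> a \<otimes> inv u l \<in> H"
      using reps unfolding coset_reps_def by blast
    then have "u l \<otimes> b \<otimes> inv u j \<in> H"
      using ij split[OF \<open>i < n\<close> \<open>j < n\<close> l(1)] u \<open>i < n\<close> \<open>j < n\<close> l(1) b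
      by (simp add: coset_table_def subgroup_mult_left_iff[OF H])
    then show "(i, j) \<in> coset_table G H n u a O coset_table G H n u b"
      using l \<open>i < n\<close> \<open>j < n\<close> unfolding coset_table_def by blast
  next
    assume "(i, j) \<in> coset_table G H n u a O coset_table G H n u b"
    then obtain l where ijl: "i < n" "j < n" "l < n"
      and "u i \<otimes> a \<otimes> inv u l \<in> H" "u l \<otimes> b \<otimes> inv u j \<in> H"
      unfolding coset_table_def by blast
    then show "(i, j) \<in> coset_table G H n u (a \<otimes> b)"
      using split[OF ijl] subgroup.m_closed[OF H] unfolding coset_table_def by simp
  qed
  then show ?thesis
    by (simp add: set_eq_iff split_paired_All)
qed

lemma coset_table_inv:
  assumes H: "subgroup H G" and u: "\<And>j. j < n \<Longrightarrow> u j \<in> carrier G" and a: "a \<in> carrier G"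
  shows "coset_table G H n u (inv a) = (coset_table G H n u a)\<inverse>"
proof -
  have "inv (u i \<otimes> inv a \<otimes> inv u j) = u j \<otimes> a \<otimes> inv u i" if "i < n" "j < n" for i j
    using u[OF that(1)] u[OF that(2)] a by (simp add: inv_mult_group m_assoc)
  then have "u i \<otimes> inv a \<otimes> inv u j \<in> H \<longleftrightarrow> u j \<otimes> a \<otimes> inv u i \<in> H" if "i < n" "j < n" for i j
    using that u a H by (metis inv_closed m_closed subgroup.m_inv_closed inv_inv)
  then show ?thesis
    unfolding coset_table_def by auto
qed

lemma coset_tables_agree_subgroup:
  assumes H1: "subgroup H1 G" and reps1: "coset_reps G K H1 n u1"
    and H2: "subgroup H2 G" and reps2: "coset_reps G K H2 n u2"
    and K: "subgroup K G" and one: "coset_table G H1 n u1 \<one> = coset_table G H2 n u2 \<one>"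
  shows "subgroup {k \<in> K. coset_table G H1 n u1 k = coset_table G H2 n u2 k} G" (is "subgroup ?E G")
proof (rule subgroupI)
  show "?E \<subseteq> carrier G"
    using subgroup.subset[OF K] by blast
  show "?E \<noteq> {}"
    using one subgroup.one_closed[OF K] by blast
next
  fix a assume "a \<in> ?E"
  then show "inv a \<in> ?E"
    using coset_table_inv[OF H1 coset_reps_carrier[OF reps1 K]]
      coset_table_inv[OF H2 coset_reps_carrier[OF reps2 K]]
      subgroup.m_inv_closed[OF K] subgroup.mem_carrier[OF K] by auto
next
  fix a b assume "a \<in> ?E" "b \<in> ?E"
  then show "a \<otimes> b \<in> ?E"
    using coset_table_mult[OF H1 K reps1] coset_table_mult[OF H2 K reps2]
      subgroup.m_closed[OF K] subgroup.mem_carrier[OF K] by auto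
qed

lemma mem_iff_coset_table:
  assumes "u 0 = \<one>" "0 < n" "k \<in> carrier G"
  shows "k \<in> H \<longleftrightarrow> (0, 0) \<in> coset_table G H n u k"
  using assms by (simp add: coset_table_def)

lemma Int_generate_eq_if_coset_tables_agree:
  assumes H1: "subgroup H1 G" "coset_reps G K H1 n u1" "u1 0 = \<one>"
    and H2: "subgroup H2 G" "coset_reps G K H2 n u2" "u2 0 = \<one>"
    and K: "subgroup K G" and S: "S \<subseteq> K"
    and agree: "\<And>k. k \<in> insert \<one> S \<Longrightarrow> coset_table G H1 n u1 k = coset_table G H2 n u2 k"
  shows "H1 \<inter> generate G S = H2 \<inter> generate G S"
proof -
  have gen: "generate G S \<subseteq> {k \<in> K. coset_table G H1 n u1 k = coset_table G H2 n u2 k}"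
    using S agree coset_tables_agree_subgroup[OF H1(1,2) H2(1,2) K agree[OF insertI1]]
    by (intro generate_subgroup_incl) auto
  obtain j where "j < n"
    using H1(2) subgroup.one_closed[OF K] unfolding coset_reps_def by blast
  then have "0 < n"
    by simp
  have "d \<in> H1 \<longleftrightarrow> d \<in> H2" if d: "d \<in> generate G S" for d
  proof -
    have "d \<in> carrier G"
      using d gen subgroup.mem_carrier[OF K] by blast
    then have "d \<in> H1 \<longleftrightarrow> (0, 0) \<in> coset_table G H1 n u1 d"
      and "d \<in> H2 \<longleftrightarrow> (0, 0) \<in> coset_table G H2 n u2 d"
      using mem_iff_coset_table[where u = u1, OF H1(3) \<open>0 < n\<close>]
        mem_iff_coset_table[where u = u2, OF H2(3) \<open>0 < n\<close>] by blast+
    moreover have "coset_table G H1 n u1 d = coset_table G H2 n u2 d"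
      using d gen by blast
    ultimately show ?thesis
      by simp
  qed
  then show ?thesis
    by blast
qed

lemma card_subgroups_with_coset_reps_le:
  assumes rank: "rank_at_most G r" and K: "subgroup K G" and fin: "finite F"
    and F: "\<And>H. H \<in> F \<Longrightarrow> subgroup H G \<and> H \<subseteq> K \<and> (\<exists>u. u 0 = \<one> \<and> coset_reps G K H n u)"
  shows "card F \<le> 2 ^ ((r + 1) * n * n)"
proof -
  obtain U where U: "\<And>H. H \<in> F \<Longrightarrow> U H 0 = \<one> \<and> coset_reps G K H n (U H)"
    using F by metis
  obtain A where A: "A \<subseteq> K" "finite A" "\<And>H1 H2. H1 \<in> F \<Longrightarrow> H2 \<in> F \<Longrightarrow> H1 \<inter> A = H2 \<inter> A \<Longrightarrow> H1 = H2"
    using finite_separating_subset[OF fin] F by metis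
  obtain S where S: "S \<subseteq> carrier G" "finite S" "card S \<le> r" "generate G S = generate G A"
    using rank[unfolded rank_at_most_def, rule_format, of A] A(1,2) subgroup.subset[OF K] by blast
  have "S \<subseteq> generate G A"
    unfolding S(4)[symmetric] by (auto intro: generate.incl)
  also have "\<dots> \<subseteq> K"
    using A(1) by (intro generate_subgroup_incl[OF _ K])
  finally have "S \<subseteq> K" .
  have "A \<subseteq> generate G S"
    unfolding S(4) by (auto intro: generate.incl)
  define sig where "sig H = Sigma (insert \<one> S) (coset_table G H n (U H))" for H
  have "inj_on sig F"
  proof (rule inj_onI)
    fix H1 H2 assume H: "H1 \<in> F" "H2 \<in> F" "sig H1 = sig H2"
    have "coset_table G H1 n (U H1) k = coset_table G H2 n (U H2) k" if "k \<in> insert \<one> S" for k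
    proof (rule Set.set_eqI)
      fix ij
      have "(k, ij) \<in> sig H1 \<longleftrightarrow> (k, ij) \<in> sig H2"
        using H(3) by simp
      then show "ij \<in> coset_table G H1 n (U H1) k \<longleftrightarrow> ij \<in> coset_table G H2 n (U H2) k"
        using that unfolding sig_def by simp
    qed
    moreover have "subgroup H1 G" "coset_reps G K H1 n (U H1)" "U H1 0 = \<one>"
      "subgroup H2 G" "coset_reps G K H2 n (U H2)" "U H2 0 = \<one>"
      using F[OF H(1)] U[OF H(1)] F[OF H(2)] U[OF H(2)] by auto
    ultimately have "H1 \<inter> generate G S = H2 \<inter> generate G S"
      using Int_generate_eq_if_coset_tables_agree[OF _ _ _ _ _ _ K \<open>S \<subseteq> K\<close>] by metis
    then show "H1 = H2"
      using A(3)[OF H(1,2)] \<open>A \<subseteq> generate G S\<close> by blast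
  qed
  then have "card F = card (sig ` F)"
    by (simp add: card_image)
  also have "\<dots> \<le> card (Pow (insert \<one> S \<times> ({..<n} \<times> {..<n})))"
    using S(2) by (intro card_mono) (auto simp: sig_def coset_table_def)
  also have "\<dots> = 2 ^ (card (insert \<one> S) * (n * n))"
    using S(2) by (simp add: card_Pow card_cartesian_product)
  also have "\<dots> \<le> 2 ^ ((r + 1) * (n * n))"
    using S(2,3) card_insert_if[OF S(2), of \<one>] by (intro power_increasing mult_right_mono) auto
  finally show ?thesis
    by (simp only: mult.assoc)
qed

lemma coset_reps_exist:
  assumes H: "subgroup H G" and K: "subgroup K G"
    and fin: "finite ((\<lambda>k. H #> k) ` K)" and le: "card ((\<lambda>k. H #> k) ` K) \<le> n"
  shows "\<exists>u. u 0 = \<one> \<and> coset_reps G K H (Suc n) u"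
proof -
  let ?C = "(\<lambda>k. H #> k) ` K"
  obtain h where h: "bij_betw h {0..<card ?C} ?C"
    using ex_bij_betw_nat_finite[OF fin] by blast
  define rep where "rep c = (SOME k. k \<in> K \<and> c = H #> k)" for c
  have rep: "rep c \<in> K \<and> c = H #> rep c" if "c \<in> ?C" for c
    using that unfolding rep_def by (rule imageE) (rule someI, blast)
  define u where "u j = (if j = 0 \<or> card ?C < j then \<one> else rep (h (j - 1)))" for j
  have "u j \<in> K" for j
  proof (cases "j = 0 \<or> card ?C < j")
    case False
    then have "j - 1 \<in> {0..<card ?C}"
      by auto
    then have "h (j - 1) \<in> ?C"
      using bij_betwE[OF h] by blast
    then show ?thesis
      using False rep unfolding u_def by simp
  qed (simp add: u_def subgroup.one_closed[OF K])
  moreover have "\<exists>j<Suc n. x \<otimes> inv u j \<in> H" if x: "x \<in> K" for x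
  proof -
    have "H #> x \<in> h ` {0..<card ?C}"
      using h x unfolding bij_betw_def by auto
    then obtain i where i: "i < card ?C" "h i = H #> x"
      by (metis atLeastLessThan_iff imageE)
    have "u (Suc i) \<in> K" "H #> x = H #> u (Suc i)"
      using rep[of "h i"] i x unfolding u_def by auto
    then have "x \<otimes> inv u (Suc i) \<in> H"
      using rcos_eq_iff[OF H, of x "u (Suc i)"] x subgroup.mem_carrier[OF K] by simp
    moreover have "Suc i < Suc n"
      using i le by simp
    ultimately show ?thesis
      by blast
  qed
  ultimately have "coset_reps G K H (Suc n) u"
    unfolding coset_reps_def by blast
  moreover have "u 0 = \<one>"
    by (simp add: u_def)
  ultimately show ?thesis
    by blast
qed

lemma finite_subgroups_of_index_le:
  assumes "rank_at_most G r" and "subgroup K G"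
  shows "finite (subgroups_of_index_le G K n) \<and>
    card (subgroups_of_index_le G K n) \<le> 2 ^ ((r + 1) * Suc n * Suc n)"
proof (rule finite_if_finite_subsets_card_bdd, rule card_subgroups_with_coset_reps_le[OF assms])
  fix F H assume "F \<subseteq> subgroups_of_index_le G K n" "H \<in> F"
  then show "subgroup H G \<and> H \<subseteq> K \<and> (\<exists>u. u 0 = \<one> \<and> coset_reps G K H (Suc n) u)"
    using coset_reps_exist[OF _ assms(2)] unfolding subgroups_of_index_le_def by blast
qed

lemma set_mult_rcos_of_subgroup:
  assumes H: "subgroup H G" and K: "subgroup K G" and HK: "H \<subseteq> K" and x: "x \<in> carrier G"
  shows "K <#> (H #> x) = K #> x"
proof -
  have "K <#> H = K"
    using set_mult_subgroup_idem[OF K subgroup_incl[OF H K HK]] .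
  then show ?thesis
    using setmult_rcos_assoc[OF subgroup.subset[OF K] subgroup.subset[OF H] x] by simp
qed

lemma rcosets_within_rcos:
  assumes H: "subgroup H G" and K: "subgroup K G" and HK: "H \<subseteq> K" and y: "y \<in> carrier G"
  shows "{C \<in> rcosets H. K <#> C = K #> y} = (\<lambda>k. H #> (k \<otimes> y)) ` K"
proof (intro equalityI subsetI)
  fix C assume "C \<in> {C \<in> rcosets H. K <#> C = K #> y}"
  then obtain x where x: "x \<in> carrier G" "C = H #> x" "K #> x = K #> y"
    unfolding rcosets_eq_image using set_mult_rcos_of_subgroup[OF H K HK] by auto
  then have "x \<otimes> inv y \<in> K" "x = (x \<otimes> inv y) \<otimes> y"
    using rcos_eq_iff[OF K x(1) y] y by (auto simp: m_assoc)
  then show "C \<in> (\<lambda>k. H #> (k \<otimes> y)) ` K"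
    using x(2) by (metis image_eqI)
next
  fix C assume "C \<in> (\<lambda>k. H #> (k \<otimes> y)) ` K"
  then obtain k where k: "k \<in> K" "C = H #> (k \<otimes> y)" by auto
  then have kc: "k \<in> carrier G"
    using subgroup.mem_carrier[OF K] by simp
  have "K #> (k \<otimes> y) = K #> y"
    using k(1) kc y by (simp add: rcos_eq_iff[OF K] m_assoc)
  then show "C \<in> {C \<in> rcosets H. K <#> C = K #> y}"
    using k kc y set_mult_rcos_of_subgroup[OF H K HK, of "k \<otimes> y"]
    unfolding rcosets_eq_image by auto
qed

lemma card_rcosets_within_rcos:
  assumes H: "subgroup H G" and K: "subgroup K G" and HK: "H \<subseteq> K" and y: "y \<in> carrier G"
  shows "card {C \<in> rcosets H. K <#> C = K #> y} = card ((\<lambda>k. H #> k) ` K)"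
  unfolding rcosets_within_rcos[OF assms]
proof (rule card_image_eq_if_same_fibres)
  fix k1 k2 assume "k1 \<in> K" "k2 \<in> K"
  then have k: "k1 \<in> carrier G" "k2 \<in> carrier G"
    using subgroup.mem_carrier[OF K] by auto
  then have "(k1 \<otimes> y) \<otimes> inv (k2 \<otimes> y) = k1 \<otimes> inv k2"
    using y by (simp add: inv_mult_group m_assoc) (simp add: m_assoc[symmetric])
  then show "H #> (k1 \<otimes> y) = H #> (k2 \<otimes> y) \<longleftrightarrow> H #> k1 = H #> k2"
    using rcos_eq_iff[OF H] k y by simp
qed

lemma card_rcosets_mult:
  assumes H: "subgroup H G" and K: "subgroup K G" and HK: "H \<subseteq> K" and fin: "finite (rcosets H)"
  shows "card (rcosets H) = card (rcosets K) * card ((\<lambda>k. H #> k) ` K)"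
proof -
  have img: "rcosets K = (\<lambda>C. K <#> C) ` (rcosets H)"
    unfolding rcosets_eq_image image_image using set_mult_rcos_of_subgroup[OF H K HK] by simp
  then have "finite (rcosets K)"
    using fin by simp
  have "card (rcosets H) = card (\<Union>B\<in>rcosets K. {C \<in> rcosets H. K <#> C = B})"
    unfolding img by (rule arg_cong[where f = card]) blast
  also have "\<dots> = (\<Sum>B\<in>rcosets K. card {C \<in> rcosets H. K <#> C = B})"
    using \<open>finite (rcosets K)\<close> fin by (intro card_UN_disjoint) auto
  also have "\<dots> = (\<Sum>B\<in>rcosets K. card ((\<lambda>k. H #> k) ` K))"
  proof (rule sum.cong[OF refl])
    fix B assume "B \<in> rcosets K"
    then obtain y where "y \<in> carrier G" "B = K #> y"
      unfolding rcosets_eq_image by auto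
    then show "card {C \<in> rcosets H. K <#> C = B} = card ((\<lambda>k. H #> k) ` K)"
      using card_rcosets_within_rcos[OF H K HK] by simp
  qed
  finally show ?thesis
    by simp
qed

lemma subgroup_set_mult_normal:
  assumes "T \<lhd> G" and "subgroup H G"
  shows "subgroup (H <#> T) G"
  using mult_norm_subgroup[OF assms] commut_normal[OF assms(2,1)] by simp

lemma subset_set_mult_left:
  assumes "subgroup T G" and "H \<subseteq> carrier G"
  shows "H \<subseteq> H <#> T"
proof
  fix h assume "h \<in> H"
  then have "h = h \<otimes> \<one>"
    using assms(2) by auto
  then show "h \<in> H <#> T"
    unfolding set_mult_def using \<open>h \<in> H\<close> subgroup.one_closed[OF assms(1)] by blast
qed

lemma subset_set_mult_right:
  assumes "subgroup H G" and "T \<subseteq> carrier G"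
  shows "T \<subseteq> H <#> T"
proof
  fix t assume "t \<in> T"
  then have "t = \<one> \<otimes> t"
    using assms(2) by auto
  then show "t \<in> H <#> T"
    unfolding set_mult_def using \<open>t \<in> T\<close> subgroup.one_closed[OF assms(1)] by blast
qed

lemma rcos_image_set_mult:
  assumes H: "subgroup H G" and T: "T \<subseteq> carrier G"
  shows "(\<lambda>k. H #> k) ` (H <#> T) = (\<lambda>t. H #> t) ` T"
proof (intro equalityI subsetI)
  fix C assume "C \<in> (\<lambda>k. H #> k) ` (H <#> T)"
  then obtain h t where ht: "h \<in> H" "t \<in> T" "C = H #> (h \<otimes> t)"
    unfolding set_mult_def by blast
  then have "C = H #> t"
    using coset_mult_assoc[OF subgroup.subset[OF H], of h t] subgroup.rcos_const[OF H is_group]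
      subgroup.mem_carrier[OF H] T by auto
  then show "C \<in> (\<lambda>t. H #> t) ` T"
    using ht(2) by blast
qed (use subset_set_mult_right[OF H T] in blast)

lemma card_rcos_image_dvd:
  assumes T: "subgroup T G" "finite T" and H: "subgroup H G"
  shows "card ((\<lambda>t. H #> t) ` T) dvd card T"
proof -
  have TH: "subgroup (T \<inter> H) G"
    using subgroups_Inter_pair[OF T(1) H] .
  interpret T: group "G\<lparr>carrier := T\<rparr>"
    using subgroup.subgroup_is_group[OF T(1) is_group] .
  have "card (rcosets\<^bsub>G\<lparr>carrier := T\<rparr>\<^esub> (T \<inter> H)) * card (T \<inter> H) = card T"
    using T.lagrange subgroup_incl[OF TH T(1)] unfolding order_def by fastforce
  moreover have "rcosets\<^bsub>G\<lparr>carrier := T\<rparr>\<^esub> (T \<inter> H) = (\<lambda>t. (T \<inter> H) #> t) ` T"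
    unfolding RCOSETS_def by auto
  moreover have "card ((\<lambda>t. (T \<inter> H) #> t) ` T) = card ((\<lambda>t. H #> t) ` T)"
  proof (rule card_image_eq_if_same_fibres)
    fix x y assume xy: "x \<in> T" "y \<in> T"
    then have c: "x \<in> carrier G" "y \<in> carrier G"
      using subgroup.mem_carrier[OF T(1)] by auto
    have "x \<otimes> inv y \<in> T"
      using xy subgroup.m_closed[OF T(1)] subgroup.m_inv_closed[OF T(1)] by blast
    then show "(T \<inter> H) #> x = (T \<inter> H) #> y \<longleftrightarrow> H #> x = H #> y"
      using rcos_eq_iff[OF TH c] rcos_eq_iff[OF H c] by simp
  qed
  ultimately show ?thesis
    by (metis dvd_triv_left)
qed

lemma subset_if_card_rcos_image_eq_1:
  assumes T: "subgroup T G" and H: "subgroup H G" and one: "card ((\<lambda>t. H #> t) ` T) = 1"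
  shows "T \<subseteq> H"
proof
  fix t assume t: "t \<in> T"
  have "H #> t = H #> \<one>"
    using one t subgroup.one_closed[OF T] by (metis card_1_singletonE imageI singletonD)
  then show "t \<in> H"
    using rcos_eq_iff[OF H] t subgroup.mem_carrier[OF T] by simp
qed

lemma card_rcosets_set_mult_normal:
  assumes T: "T \<lhd> G" and H: "subgroup H G" and fin: "finite (rcosets H)"
  shows "card (rcosets H) = card (rcosets (H <#> T)) * card ((\<lambda>t. H #> t) ` T)"
proof -
  have "subgroup T G"
    using T normal_imp_subgroup by blast
  then show ?thesis
    using card_rcosets_mult[OF H subgroup_set_mult_normal[OF T H]
        subset_set_mult_left[OF _ subgroup.subset[OF H]] fin]
      rcos_image_set_mult[OF H subgroup.subset] by simp
qed

lemma index_set_mult_normal: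
  assumes T: "T \<lhd> G" "finite T" and H: "subgroup H G" and fin: "finite (rcosets H)"
  shows "\<exists>s. s dvd card T \<and> s dvd card (rcosets H) \<and> card (rcosets (H <#> T)) = card (rcosets H) div s"
proof -
  let ?s = "card ((\<lambda>t. H #> t) ` T)"
  have "?s dvd card T"
    using card_rcos_image_dvd[OF normal_imp_subgroup[OF T(1)] T(2) H] .
  moreover have "0 < ?s"
    using H normal_imp_subgroup[OF T(1)] subgroup.one_closed T(2) by (simp add: card_gt_0_iff) blast
  ultimately show ?thesis
    using card_rcosets_set_mult_normal[OF T(1) H fin] by (intro exI[of _ ?s]) simp
qed

lemma group_hom_Mod:
  assumes "T \<lhd> G"
  shows "group_hom G (G Mod T) (\<lambda>x. T #> x)"
  unfolding group_hom_def group_hom_axioms_def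
  using normal.factorgroup_is_group[OF assms] normal.r_coset_hom_Mod[OF assms] is_group by blast

lemma rcos_mem_image_iff:
  assumes T: "subgroup T G" and K: "subgroup K G" and TK: "T \<subseteq> K" and z: "z \<in> carrier G"
  shows "T #> z \<in> (\<lambda>x. T #> x) ` K \<longleftrightarrow> z \<in> K"
proof
  assume "T #> z \<in> (\<lambda>x. T #> x) ` K"
  then obtain k where k: "k \<in> K" "T #> z = T #> k" by auto
  have kc: "k \<in> carrier G"
    using k subgroup.mem_carrier[OF K] by simp
  have "z \<otimes> inv k \<in> K"
    using rcos_eq_iff[OF T z kc] k TK by blast
  then have "(z \<otimes> inv k) \<otimes> k \<in> K"
    using k subgroup.m_closed[OF K] by blast
  then show "z \<in> K"
    using z kc by (simp add: m_assoc)
qed auto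

lemma Union_rcos_image:
  assumes T: "subgroup T G" and K: "subgroup K G" and TK: "T \<subseteq> K"
  shows "\<Union> ((\<lambda>x. T #> x) ` K) = K"
proof
  show "\<Union> ((\<lambda>x. T #> x) ` K) \<subseteq> K"
    using TK subgroup.m_closed[OF K] unfolding r_coset_def by blast
  show "K \<subseteq> \<Union> ((\<lambda>x. T #> x) ` K)"
    using rcos_self[OF _ T] subgroup.mem_carrier[OF K] by blast
qed

lemma card_rcosets_Mod_image:
  assumes T: "T \<lhd> G" and K: "subgroup K G" and TK: "T \<subseteq> K"
  shows "card (rcosets\<^bsub>G Mod T\<^esub> ((\<lambda>x. T #> x) ` K)) = card (rcosets K)"
proof -
  interpret \<pi>: group_hom G "G Mod T" "\<lambda>x. T #> x"
    using group_hom_Mod[OF T] .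
  let ?A = "(\<lambda>x. T #> x) ` K"
  have A: "subgroup ?A (G Mod T)"
    using \<pi>.subgroup_img_is_subgroup[OF K] .
  have "rcosets\<^bsub>G Mod T\<^esub> ?A = (\<lambda>x. ?A #>\<^bsub>G Mod T\<^esub> (T #> x)) ` carrier G"
    unfolding group.rcosets_eq_image[OF \<pi>.H.is_group] carrier_FactGroup image_image ..
  moreover have "card ((\<lambda>x. ?A #>\<^bsub>G Mod T\<^esub> (T #> x)) ` carrier G) = card ((\<lambda>x. K #> x) ` carrier G)"
  proof (rule card_image_eq_if_same_fibres)
    fix x y assume xy: "x \<in> carrier G" "y \<in> carrier G"
    then have "T #> x \<in> carrier (G Mod T)" "T #> y \<in> carrier (G Mod T)"
      unfolding carrier_FactGroup by auto
    then have "?A #>\<^bsub>G Mod T\<^esub> (T #> x) = ?A #>\<^bsub>G Mod T\<^esub> (T #> y)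
        \<longleftrightarrow> (T #> x) \<otimes>\<^bsub>G Mod T\<^esub> inv\<^bsub>G Mod T\<^esub> (T #> y) \<in> ?A"
      by (rule group.rcos_eq_iff[OF \<pi>.H.is_group A])
    moreover have "(T #> x) \<otimes>\<^bsub>G Mod T\<^esub> inv\<^bsub>G Mod T\<^esub> (T #> y) = T #> (x \<otimes> inv y)"
      using xy \<pi>.hom_mult[of x "inv y"] \<pi>.hom_inv[of y] by simp
    ultimately show "?A #>\<^bsub>G Mod T\<^esub> (T #> x) = ?A #>\<^bsub>G Mod T\<^esub> (T #> y) \<longleftrightarrow> K #> x = K #> y"
      using rcos_mem_image_iff[OF normal_imp_subgroup[OF T] K TK m_closed[OF xy(1) inv_closed[OF xy(2)]]] rcos_eq_iff[OF K xy]
      by (simp only:)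
  qed
  ultimately show ?thesis
    unfolding rcosets_eq_image by simp
qed

lemma Union_subgroup_Mod:
  assumes T: "T \<lhd> G" and A: "subgroup A (G Mod T)"
  shows "subgroup (\<Union>A) G" "T \<subseteq> \<Union>A" "(\<lambda>x. T #> x) ` (\<Union>A) = A"
proof -
  show "subgroup (\<Union>A) G"
    using normal.factgroup_subgroup_union_subgroup[OF T A] .
  have "\<one>\<^bsub>G Mod T\<^esub> \<in> A"
    using subgroup.one_closed[OF A] .
  then show "T \<subseteq> \<Union>A"
    by auto
  have "A = rcosets\<^bsub>G\<lparr>carrier := \<Union>A\<rparr>\<^esub> T"
    using normal.factgroup_subgroup_union_factor[OF T A] .
  also have "\<dots> = (\<lambda>x. T #> x) ` (\<Union>A)"
    unfolding RCOSETS_def by auto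
  finally show "(\<lambda>x. T #> x) ` (\<Union>A) = A"
    by simp
qed

lemma counted_set_mult_normal:
  assumes "T \<lhd> G" and "counted k H G"
  shows "counted k (H <#> T) G"
  using assms subgroup_set_mult_normal normal_subgroup_set_mult_closed
  unfolding counted_def by (cases k) simp_all

lemma counted_Mod_image:
  assumes T: "T \<lhd> G" and K: "counted k K G"
  shows "counted k ((\<lambda>x. T #> x) ` K) (G Mod T)"
proof (cases k)
  case AllSub
  then show ?thesis
    using K group_hom.subgroup_img_is_subgroup[OF group_hom_Mod[OF T]] unfolding counted_def by simp
next
  case NormalSub
  then show ?thesis
    using K normal.surj_hom_normal_subgroup[OF _ group_hom_Mod[OF T]] unfolding counted_def
    by (simp add: carrier_FactGroup)
qed

lemma counted_Union_Mod:
  assumes T: "T \<lhd> G" and A: "counted k A (G Mod T)"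
  shows "counted k (\<Union>A) G"
  using A Union_subgroup_Mod(1)[OF T] normal.factgroup_subgroup_union_normal[OF T]
  unfolding counted_def by (cases k) simp_all

lemma sub_count_Mod:
  assumes T: "T \<lhd> G"
  shows "sub_count (G Mod T) k m = card {K. counted k K G \<and> T \<subseteq> K \<and> card (rcosets K) = m}"
proof -
  let ?L = "{K. counted k K G \<and> T \<subseteq> K \<and> card (rcosets K) = m}"
  let ?R = "{A. counted k A (G Mod T) \<and> card (rcosets\<^bsub>G Mod T\<^esub> A) = m}"
  have "bij_betw (\<lambda>K. (\<lambda>x. T #> x) ` K) ?L ?R"
  proof (rule bij_betw_byWitness[where f' = Union])
    show "\<forall>K\<in>?L. \<Union> ((\<lambda>x. T #> x) ` K) = K"
      using Union_rcos_image[OF normal_imp_subgroup[OF T]] counted_subgroup by blast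
    show "\<forall>A\<in>?R. (\<lambda>x. T #> x) ` \<Union>A = A"
      using Union_subgroup_Mod(3)[OF T] counted_subgroup by blast
    show "(\<lambda>K. (\<lambda>x. T #> x) ` K) ` ?L \<subseteq> ?R"
      using counted_Mod_image[OF T] card_rcosets_Mod_image[OF T counted_subgroup] by auto
    show "Union ` ?R \<subseteq> ?L"
    proof clarify
      fix A assume A: "counted k A (G Mod T)"
      note Union = Union_subgroup_Mod[OF T counted_subgroup[OF A]]
      show "counted k (\<Union>A) G \<and> T \<subseteq> \<Union>A \<and> card (rcosets (\<Union>A)) = card (rcosets\<^bsub>G Mod T\<^esub> A)"
        using Union counted_Union_Mod[OF T A] card_rcosets_Mod_image[OF T Union(1,2)] by simp
    qed
  qed
  then show ?thesis
    unfolding sub_count_def by (simp add: bij_betw_same_card)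
qed

lemma finite_subgroups_of_index:
  assumes "rank_at_most G r" and "0 < n"
  shows "finite {H. subgroup H G \<and> card (rcosets H) = n}"
proof (rule finite_subset)
  show "{H. subgroup H G \<and> card (rcosets H) = n} \<subseteq> subgroups_of_index_le G (carrier G) n"
    using assms(2) subgroup.subset unfolding subgroups_of_index_le_def rcosets_eq_image
    by (fastforce intro: card_ge_0_finite)
  show "finite (subgroups_of_index_le G (carrier G) n)"
    using finite_subgroups_of_index_le[OF assms(1) subgroup_self] by blast
qed

lemma sub_count_Mod_le:
  assumes "rank_at_most G r" and "T \<lhd> G" and "0 < n"
  shows "sub_count (G Mod T) k n \<le> sub_count G k n"
  unfolding sub_count_Mod[OF assms(2)] unfolding sub_count_def
  using counted_subgroup
  by (intro card_mono finite_subset[OF _ finite_subgroups_of_index[OF assms(1,3)]]) auto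

lemma card_subgroups_set_mult_normal_eq:
  assumes "rank_at_most G r" and T: "T \<lhd> G" "finite T" and K: "subgroup K G"
  shows "finite {H. subgroup H G \<and> H <#> T = K} \<and>
    card {H. subgroup H G \<and> H <#> T = K} \<le> 2 ^ ((r + 1) * Suc (card T) * Suc (card T))"
proof -
  have "{H. subgroup H G \<and> H <#> T = K} \<subseteq> subgroups_of_index_le G K (card T)"
  proof clarify
    fix H assume H: "subgroup H G"
    have "H \<subseteq> H <#> T"
      using subset_set_mult_left[OF normal_imp_subgroup[OF T(1)] subgroup.subset[OF H]] .
    moreover have "(\<lambda>k. H #> k) ` (H <#> T) = (\<lambda>t. H #> t) ` T"
      using rcos_image_set_mult[OF H subgroup.subset[OF normal_imp_subgroup[OF T(1)]]] .
    ultimately show "H \<in> subgroups_of_index_le G (H <#> T) (card T)"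
      using H T(2) card_image_le unfolding subgroups_of_index_le_def by auto
  qed
  then show ?thesis
    using finite_subgroups_of_index_le[OF assms(1) K, of "card T"]
    by (meson card_mono finite_subset order_trans)
qed

lemma subgroups_of_index_covered:
  assumes T: "T \<lhd> G" "finite T" and n: "0 < n"
  shows "{H. counted k H G \<and> card (rcosets H) = n} \<subseteq>
    (\<Union>s\<in>{s. s dvd card T \<and> s dvd n}. \<Union>K\<in>{K. counted k K G \<and> T \<subseteq> K \<and> card (rcosets K) = n div s}.
      {H. subgroup H G \<and> H <#> T = K})"
proof
  fix H assume "H \<in> {H. counted k H G \<and> card (rcosets H) = n}"
  then have H: "counted k H G" "card (rcosets H) = n"
    by auto
  then obtain s where "s dvd card T" "s dvd n" "card (rcosets (H <#> T)) = n div s"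
    using index_set_mult_normal[OF T counted_subgroup] n card_ge_0_finite by blast
  moreover have "T \<subseteq> H <#> T"
    using subset_set_mult_right[OF counted_subgroup[OF H(1)] subgroup.subset[OF normal_imp_subgroup[OF T(1)]]] .
  ultimately show "H \<in> (\<Union>s\<in>{s. s dvd card T \<and> s dvd n}.
      \<Union>K\<in>{K. counted k K G \<and> T \<subseteq> K \<and> card (rcosets K) = n div s}. {H. subgroup H G \<and> H <#> T = K})"
    using counted_set_mult_normal[OF T(1) H(1)] counted_subgroup[OF H(1)] by blast
qed

lemma sub_count_le_sum_Mod:
  assumes rank: "rank_at_most G r" and T: "T \<lhd> G" "finite T" and n: "0 < n"
  shows "sub_count G k n \<le> 2 ^ ((r + 1) * Suc (card T) * Suc (card T)) *
    (\<Sum>s | s dvd card T. if s dvd n then sub_count (G Mod T) k (n div s) else 0)"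
proof -
  define B where "B = (2::nat) ^ ((r + 1) * Suc (card T) * Suc (card T))"
  define D where "D = {s. s dvd card T}"
  define above where "above m = {K. counted k K G \<and> T \<subseteq> K \<and> card (rcosets K) = m}" for m
  define M where "M = (\<Union>s\<in>{s \<in> D. s dvd n}. above (n div s))"
  have "card T \<noteq> 0"
    using T subgroup.one_closed[OF normal_imp_subgroup] by (metis card_0_eq empty_iff)
  then have "finite D"
    unfolding D_def by simp
  have above_finite: "finite (above (n div s))" if "s \<in> {s \<in> D. s dvd n}" for s
  proof -
    have "0 < n div s"
      using that n by (auto elim!: dvdE)
    then show ?thesis
      using counted_subgroup unfolding above_def
      by (intro finite_subset[OF _ finite_subgroups_of_index[OF rank]]) auto
  qed
  have "{H. counted k H G \<and> card (rcosets H) = n} \<subseteq> (\<Union>K\<in>M. {H. subgroup H G \<and> H <#> T = K})"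
    using subgroups_of_index_covered[OF T n, of k] unfolding M_def above_def D_def by simp
  moreover have "finite M"
    unfolding M_def using \<open>finite D\<close> above_finite by auto
  have fibre: "finite {H. subgroup H G \<and> H <#> T = K} \<and> card {H. subgroup H G \<and> H <#> T = K} \<le> B"
    if "K \<in> M" for K
    using that card_subgroups_set_mult_normal_eq[OF rank T] counted_subgroup
    unfolding B_def M_def above_def by blast
  ultimately have "sub_count G k n \<le> card (\<Union>K\<in>M. {H. subgroup H G \<and> H <#> T = K})"
    unfolding sub_count_def using fibre \<open>finite M\<close> by (intro card_mono) auto
  also have "\<dots> \<le> (\<Sum>K\<in>M. card {H. subgroup H G \<and> H <#> T = K})"
    using \<open>finite M\<close> by (rule card_UN_le)
  also have "\<dots> \<le> B * card M"
    using sum_bounded_above[of M _ B] fibre by (simp add: mult.commute)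
  also have "\<dots> \<le> B * (\<Sum>s\<in>{s \<in> D. s dvd n}. card (above (n div s)))"
    unfolding M_def using \<open>finite D\<close> above_finite by (intro mult_left_mono card_UN_le) auto
  also have "\<dots> = B * (\<Sum>s\<in>D. if s dvd n then sub_count (G Mod T) k (n div s) else 0)"
    using \<open>finite D\<close> by (simp add: sum.inter_filter sub_count_Mod[OF T(1), symmetric] above_def)
  finally show ?thesis
    unfolding B_def D_def .
qed

lemma normal_subset_if_prime_power_index:
  assumes T: "T \<lhd> G" "finite T" and H: "subgroup H G"
    and p: "Factorial_Ring.prime (p::nat)" "\<not> p dvd card T" and index: "card (rcosets H) = p ^ j"
  shows "T \<subseteq> H"
proof -
  let ?s = "card ((\<lambda>t. H #> t) ` T)"
  have "finite (rcosets H)"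
    using index p(1) by (metis card.infinite power_not_zero prime_gt_0_nat less_nat_zero_code)
  then have "?s dvd p ^ j"
    using card_rcosets_set_mult_normal[OF T(1) H] index by (metis dvd_triv_right)
  then obtain i where "?s = p ^ i"
    using divides_primepow_nat[OF p(1)] by blast
  moreover have "?s dvd card T"
    using card_rcos_image_dvd[OF normal_imp_subgroup[OF T(1)] T(2) H] .
  ultimately have "?s = 1"
    using p(2) by (metis dvd_power dvd_trans neq0_conv power_0)
  then show ?thesis
    using subset_if_card_rcos_image_eq_1[OF normal_imp_subgroup[OF T(1)] H] by blast
qed

lemma sub_count_Mod_prime_power:
  assumes "T \<lhd> G" "finite T" "Factorial_Ring.prime (p::nat)" "\<not> p dvd card T"
  shows "sub_count (G Mod T) k (p ^ j) = sub_count G k (p ^ j)"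
  unfolding sub_count_Mod[OF assms(1)] unfolding sub_count_def
  using normal_subset_if_prime_power_index[OF assms(1,2) _ assms(3,4)] counted_subgroup by metis

end

theorem lemma5p2:
  fixes G :: "('a, 'b) monoid_scheme" and T :: "'a set"
  assumes "group G" and "finite_rank G" and "T \<lhd> G" and "finite T"
  shows "\<forall>k. growth_alpha G k = growth_alpha (G Mod T) k \<and>
           (\<forall>p::nat. Factorial_Ring.prime p \<and> \<not> p dvd card T \<longrightarrow> zeta_local G k p = zeta_local (G Mod T) k p)"
proof -
  interpret group G by fact
  note T = assms(3,4)
  obtain r where rank: "rank_at_most G r"
    using assms(2) finite_rank_iff_rank_at_most by blast
  have "0 < card T"
    using T subgroup.one_closed[OF normal_imp_subgroup] card_gt_0_iff by blast
  show ?thesis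
  proof (intro allI conjI impI)
    fix k
    have "(\<Sum>i=1..N. sub_count (G Mod T) k i) \<le> 1 * (\<Sum>i=1..N. sub_count G k i)" for N
      unfolding mult_1 using sub_count_Mod_le[OF rank T(1)] by (intro sum_mono) simp
    moreover have "(\<Sum>i=1..N. sub_count G k i)
        \<le> 2 ^ ((r + 1) * Suc (card T) * Suc (card T)) * card T * (\<Sum>i=1..N. sub_count (G Mod T) k i)" for N
      using sub_count_le_sum_Mod[OF rank T] by (rule sum_le_if_divisor_sum_bound[OF \<open>0 < card T\<close>])
    ultimately show "growth_alpha G k = growth_alpha (G Mod T) k"
      by (intro antisym growth_alpha_mono)
  next
    fix k and p :: nat
    assume "Factorial_Ring.prime p \<and> \<not> p dvd card T"
    then show "zeta_local G k p = zeta_local (G Mod T) k p"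
      unfolding zeta_local_def using sub_count_Mod_prime_power[OF T] by simp
  qed
qed

end
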